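(* Given any instance and any real number $t\ge1$, let $N^*\subseteq N$ be a $t$-cohesive group and $A$ an allocation satisfying EJR-M. Then the average satisfaction of $N^*$ with respect to $A$ is at least $\lfloor t\rfloor\cdot\left(1-\frac{\lfloor t\rfloor+1}{2t}\right)$.
   Context: Model: There is a set of agents $N=\{1,\dots,n\}$. The resource $R$ consists of a cake $C=[0,c]$ for a real $c\ge 0$ and a set of indivisible goods $G=\{g_1,\dots,g_m\}$ for an integer $m\ge 0$, with $\max(c,m)>0$. A piece of cake is a union of finitely many disjoint closed subintervals of $C$; its length $\ell(\cdot)$ is the sum of the lengths of its intervals. A bundle $R'=(C',G')$ consists of a piece of cake $C'\subseteq C$ and a set $G'\subseteq G$; its size is $s(R')=\ell(C')+|G'|$. Each agent $i$ approves a bundle $R_i=(C_i,G_i)$, and her utility for a bundle $R'$ is $u_i(R')=\ell(C_i\cap C')+|G_i\cap G'|$. A parameter $\alpha\in(0,c+m]$ is given; an allocation is a bundle $A$ with $s(A)\le\alpha$. For a real $t>0$, $N^*\subseteq N$ is $t$-cohesive if $|N^*|\ge t n/\alpha$ and $s(\bigcap_{i\in N^*}R_i)\ge t$. EJR-M: an allocation $A$ satisfies EJR-M if for every real $t>0$ and every $t$-cohesive group $N^*$ for which there exists a bundle $R^*\subseteq R$ with $s(R^* )=t$ and $R^*\subseteq R_i$ for all $i\in N^*$, there is $j\in N^*$ with $u_j(A)\ge t$. The average satisfaction of a group $N'\subseteq N$ with respect to $A$ is $\frac1{|N'|}\sum_{i\in N'}u_i(A)$. *)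

theory Defs
  imports "HOL-Analysis.Analysis"
begin

type_synonym 'g bndl = "real set \<times> 'g set"

definition is_piece :: "real \<Rightarrow> real set \<Rightarrow> bool" where
  "is_piece c P \<longleftrightarrow> (\<exists>I :: (real \<times> real) set. finite I
      \<and> (\<forall>(a,b)\<in>I. 0 \<le> a \<and> a \<le> b \<and> b \<le> c)
      \<and> (\<forall>(a,b)\<in>I. \<forall>(a',b')\<in>I. (a,b) \<noteq> (a',b') \<longrightarrow> {a..b} \<inter> {a'..b'} = {})
      \<and> P = (\<Union>(a,b)\<in>I. {a..b}))"

definition cake_length :: "real set \<Rightarrow> real" where
  "cake_length P = measure lborel P"

definition is_bundle :: "real \<Rightarrow> 'g set \<Rightarrow> 'g bndl \<Rightarrow> bool" where
  "is_bundle c G B \<longleftrightarrow> is_piece c (fst B) \<and> snd B \<subseteq> G"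

definition bsize :: "'g bndl \<Rightarrow> real" where
  "bsize B = cake_length (fst B) + real (card (snd B))"

definition bsubseteq :: "'g bndl \<Rightarrow> 'g bndl \<Rightarrow> bool" where
  "bsubseteq B B' \<longleftrightarrow> fst B \<subseteq> fst B' \<and> snd B \<subseteq> snd B'"

definition binter :: "('a \<Rightarrow> 'g bndl) \<Rightarrow> 'a set \<Rightarrow> 'g bndl" where
  "binter R S = ((\<Inter>i\<in>S. fst (R i)), (\<Inter>i\<in>S. snd (R i)))"

definition utility :: "('a \<Rightarrow> 'g bndl) \<Rightarrow> 'a \<Rightarrow> 'g bndl \<Rightarrow> real" where
  "utility R i B = cake_length (fst (R i) \<inter> fst B) + real (card (snd (R i) \<inter> snd B))"

text \<open>A valid instance: agents N (n = card N \<ge> 1), cake [0,c], goods G (m = card G),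
  approved bundles R, parameter alpha.\<close>
definition valid_instance :: "'a set \<Rightarrow> real \<Rightarrow> 'g set \<Rightarrow> ('a \<Rightarrow> 'g bndl) \<Rightarrow> real \<Rightarrow> bool" where
  "valid_instance N c G R alpha \<longleftrightarrow> finite N \<and> N \<noteq> {} \<and> c \<ge> 0 \<and> finite G
     \<and> max c (real (card G)) > 0
     \<and> 0 < alpha \<and> alpha \<le> c + real (card G)
     \<and> (\<forall>i\<in>N. is_bundle c G (R i))"

definition is_allocation :: "real \<Rightarrow> 'g set \<Rightarrow> real \<Rightarrow> 'g bndl \<Rightarrow> bool" where
  "is_allocation c G alpha A \<longleftrightarrow> is_bundle c G A \<and> bsize A \<le> alpha"

definition cohesive :: "'a set \<Rightarrow> ('a \<Rightarrow> 'g bndl) \<Rightarrow> real \<Rightarrow> real \<Rightarrow> 'a set \<Rightarrow> bool" where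
  "cohesive N R alpha t S \<longleftrightarrow> S \<subseteq> N
     \<and> real (card S) \<ge> t * real (card N) / alpha
     \<and> bsize (binter R S) \<ge> t"

definition EJR_M :: "'a set \<Rightarrow> real \<Rightarrow> 'g set \<Rightarrow> ('a \<Rightarrow> 'g bndl) \<Rightarrow> real \<Rightarrow> 'g bndl \<Rightarrow> bool" where
  "EJR_M N c G R alpha A \<longleftrightarrow>
     (\<forall>t S. t > 0 \<and> cohesive N R alpha t S
        \<and> (\<exists>B. is_bundle c G B \<and> bsize B = t \<and> (\<forall>i\<in>S. bsubseteq B (R i)))
        \<longrightarrow> (\<exists>j\<in>S. utility R j A \<ge> t))"

definition avg_satisfaction :: "('a \<Rightarrow> 'g bndl) \<Rightarrow> 'a set \<Rightarrow> 'g bndl \<Rightarrow> real" where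
  "avg_satisfaction R S A = (\<Sum>i\<in>S. utility R i A) / real (card S)"

end

theory Submission
  imports Defs
begin

text \<open>Let \<open>k = \<lfloor>t\<rfloor>\<close>. For every level \<open>l \<le> k\<close>, the members of the \<open>t\<close>-cohesive group \<open>N*\<close>
  whose utility is below \<open>l\<close> are fewer than \<open>l |N*| / t\<close>: otherwise they would form an
  \<open>l\<close>-cohesive group (a common bundle of size \<open>l\<close> can be cut out of the common bundle of \<open>N*\<close>),
  and EJR-M would give one of them utility at least \<open>l\<close>. Since a utility \<open>u \<ge> 0\<close> is at least
  the number of levels \<open>l \<in> {1..k}\<close> with \<open>l \<le> u\<close>, exchanging the order of summation bounds the total utility
  of \<open>N*\<close> from below by \<open>|N*| (1 - 1/t) + \<dots> + |N*| (1 - k/t) = |N*| k (1 - (k+1)/(2t))\<close>.\<close>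

text \<open>Unlike in \<open>is_piece\<close>, the intervals may overlap or be empty, which makes closure
  under intersection immediate; \<open>is_piece_iff_interval_union\<close> shows that nothing is lost.\<close>

definition interval_union :: "real \<Rightarrow> real set \<Rightarrow> bool" where
  "interval_union c U \<longleftrightarrow> (\<exists>\<I>. finite \<I> \<and> (\<forall>K\<in>\<I>. \<exists>a b. 0 \<le> a \<and> b \<le> c \<and> K = {a..b}) \<and> U = \<Union>\<I>)"

lemma Icc_Un_overlapping_Icc:
  fixes a b :: real
  assumes "finite K" and "a \<le> b"
    and K: "\<And>p q. (p,q) \<in> K \<Longrightarrow> p \<le> q \<and> {p..q} \<inter> {a..b} \<noteq> {}"
  shows "{Min (insert a (fst ` K)) .. Max (insert b (snd ` K))} = {a..b} \<union> (\<Union>(p,q)\<in>K. {p..q})"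
    (is "{?m..?M} = _")
proof
  have bounds: "?m \<le> p" "q \<le> ?M" if "(p,q) \<in> K" for p q
    using \<open>finite K\<close> that by (force intro!: Min_le Max_ge)+
  moreover have "?m \<le> a" "b \<le> ?M" using \<open>finite K\<close> by auto
  ultimately show "{a..b} \<union> (\<Union>(p,q)\<in>K. {p..q}) \<subseteq> {?m..?M}"
    by fastforce
  show "{?m..?M} \<subseteq> {a..b} \<union> (\<Union>(p,q)\<in>K. {p..q})"
  proof
    fix x assume x: "x \<in> {?m..?M}"
    consider "x < a" | "b < x" | "a \<le> x" "x \<le> b" by linarith
    then show "x \<in> {a..b} \<union> (\<Union>(p,q)\<in>K. {p..q})"
    proof cases
      case 1
      have "?m \<in> insert a (fst ` K)" using \<open>finite K\<close> by (intro Min_in) auto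
      with 1 x obtain p q where "(p,q) \<in> K" "?m = p" by force
      moreover from this K have "a \<le> q" by fastforce
      ultimately show ?thesis using 1 x by force
    next
      case 2
      have "?M \<in> insert b (snd ` K)" using \<open>finite K\<close> by (intro Max_in) auto
      with 2 x obtain p q where "(p,q) \<in> K" "?M = q" by force
      moreover from this K have "p \<le> b" by fastforce
      ultimately show ?thesis using 2 x by force
    qed auto
  qed
qed

lemma is_piece_empty: "is_piece c {}"
  unfolding is_piece_def by (intro exI[of _ "{}"]) auto

lemma is_piece_Un_Icc:
  assumes P: "is_piece c P" and "0 \<le> a" "b \<le> c"
  shows "is_piece c ({a..b} \<union> P)"
proof (cases "a \<le> b")
  case False
  then show ?thesis using P by simp
next
  case ab: True
  obtain J where J: "finite J" "\<forall>(p,q)\<in>J. 0 \<le> p \<and> p \<le> q \<and> q \<le> c"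
      "\<forall>(p,q)\<in>J. \<forall>(p',q')\<in>J. (p,q) \<noteq> (p',q') \<longrightarrow> {p..q} \<inter> {p'..q'} = {}"
      "P = (\<Union>(p,q)\<in>J. {p..q})"
    using P unfolding is_piece_def by blast
  define K where "K = {(p,q)\<in>J. {p..q} \<inter> {a..b} \<noteq> {}}"
  define a' where "a' = Min (insert a (fst ` K))"
  define b' where "b' = Max (insert b (snd ` K))"
  have "K \<subseteq> J" unfolding K_def by auto
  then have "finite K" using J(1) by (rule finite_subset)
  have merged: "{a'..b'} = {a..b} \<union> (\<Union>(p,q)\<in>K. {p..q})"
    unfolding a'_def b'_def
    by (rule Icc_Un_overlapping_Icc) (use \<open>finite K\<close> ab J(2) in \<open>auto simp: K_def\<close>)
  have "0 \<le> a'" unfolding a'_def using \<open>finite K\<close> \<open>K \<subseteq> J\<close> J(2) assms(2)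
    by (subst Min_ge_iff) force+
  moreover have "b' \<le> c" unfolding b'_def using \<open>finite K\<close> \<open>K \<subseteq> J\<close> J(2) assms(3)
    by (subst Max_le_iff) force+
  moreover have "a \<in> {a'..b'}" using merged ab by simp
  then have "a' \<le> b'" by simp
  moreover have "{p..q} \<inter> {a'..b'} = {}" if "(p,q) \<in> J - K" for p q
    using that J(3) \<open>K \<subseteq> J\<close> unfolding merged K_def by fastforce
  moreover have "{a..b} \<union> P = (\<Union>(p,q)\<in>insert (a',b') (J - K). {p..q})"
    using merged \<open>K \<subseteq> J\<close> J(4) by blast
  ultimately show ?thesis
    unfolding is_piece_def using J(1-3)
    by (intro exI[of _ "insert (a',b') (J - K)"]) (auto simp: Int_commute)
qed

lemma is_piece_iff_interval_union: "is_piece c P \<longleftrightarrow> interval_union c P"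
proof
  assume "is_piece c P"
  then obtain I where "finite I" "\<forall>(a,b)\<in>I. 0 \<le> a \<and> a \<le> b \<and> b \<le> c" "P = (\<Union>(a,b)\<in>I. {a..b})"
    unfolding is_piece_def by blast
  then show "interval_union c P"
    unfolding interval_union_def by (intro exI[of _ "(\<lambda>(a,b). {a..b}) ` I"]) auto
next
  assume "interval_union c P"
  then obtain \<I> where "finite \<I>" "\<forall>K\<in>\<I>. \<exists>a b. 0 \<le> a \<and> b \<le> c \<and> K = {a..b}" "P = \<Union>\<I>"
    unfolding interval_union_def by blast
  then show "is_piece c P"
    by (induction \<I> arbitrary: P rule: finite_induct) (auto intro: is_piece_empty is_piece_Un_Icc)
qed

lemma interval_union_Int:
  assumes "interval_union c U" "interval_union c V"
  shows "interval_union c (U \<inter> V)"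
proof -
  obtain \<I> where I: "finite \<I>" "\<forall>K\<in>\<I>. \<exists>a b. 0 \<le> a \<and> b \<le> c \<and> K = {a..b}" "U = \<Union>\<I>"
    using assms(1) unfolding interval_union_def by blast
  obtain \<J> where J: "finite \<J>" "\<forall>K\<in>\<J>. \<exists>a b. 0 \<le> a \<and> b \<le> c \<and> K = {a..b}" "V = \<Union>\<J>"
    using assms(2) unfolding interval_union_def by blast
  have "U \<inter> V = \<Union>((\<lambda>(K,L). K \<inter> L) ` (\<I> \<times> \<J>))" unfolding I(3) J(3) by blast
  moreover have "\<exists>a b. 0 \<le> a \<and> b \<le> c \<and> K \<inter> L = {a..b}" if KL: "K \<in> \<I>" "L \<in> \<J>" for K L
  proof -
    obtain a b a' b' where "0 \<le> a" "b \<le> c" "K = {a..b}" "0 \<le> a'" "b' \<le> c" "L = {a'..b'}"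
      using I(2) J(2) KL by meson
    then show ?thesis by (intro exI[of _ "max a a'"] exI[of _ "min b b'"]) auto
  qed
  moreover have "finite ((\<lambda>(K,L). K \<inter> L) ` (\<I> \<times> \<J>))" using I(1) J(1) by simp
  ultimately show ?thesis
    unfolding interval_union_def by (intro exI[of _ "(\<lambda>(K,L). K \<inter> L) ` (\<I> \<times> \<J>)"]) auto
qed

lemma interval_union_INT:
  assumes "finite T" "T \<noteq> {}" "\<And>i. i \<in> T \<Longrightarrow> interval_union c (U i)"
  shows "interval_union c (\<Inter>i\<in>T. U i)"
  using assms by (induction T rule: finite_ne_induct) (auto intro: interval_union_Int)

lemma interval_union_subset_compact:
  assumes "interval_union c U" shows "U \<subseteq> {0..c}" "compact U"
proof -
  obtain \<I> where I: "finite \<I>" "\<forall>K\<in>\<I>. \<exists>a b. 0 \<le> a \<and> b \<le> c \<and> K = {a..b}" "U = \<Union>\<I>"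
    using assms unfolding interval_union_def by blast
  have "K \<subseteq> {0..c} \<and> compact K" if "K \<in> \<I>" for K
    using I(2) that by auto
  then show "U \<subseteq> {0..c}" "compact U" unfolding I(3) using I(1) by auto
qed

lemma interval_union_fmeasurable: "interval_union c U \<Longrightarrow> U \<in> fmeasurable lborel"
  by (intro fmeasurable_compact interval_union_subset_compact)

lemma continuous_on_measure_Int_atMost:
  fixes U :: "real set"
  assumes "U \<in> fmeasurable lborel"
  shows "continuous_on X (\<lambda>s. measure lborel (U \<inter> {..s}))"
proof (rule lipschitz_on_continuous_on[where L=1], rule lipschitz_onI)
  have U_meas: "U \<inter> {..s} \<in> fmeasurable lborel" for s
    using assms by (intro fmeasurable_Int_fmeasurable) (simp_all add: atMost_borel)
  have Icc_meas: "{s..s'} \<in> fmeasurable lborel" for s s' :: real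
    by (simp add: fmeasurable_compact)
  have step: "measure lborel (U \<inter> {..s'}) - measure lborel (U \<inter> {..s}) \<le> s' - s" if "s \<le> s'" for s s'
  proof -
    have "measure lborel (U \<inter> {..s'}) \<le> measure lborel ((U \<inter> {..s}) \<union> {s..s'})"
      by (intro measure_mono_fmeasurable[OF _ fmeasurableD[OF U_meas] fmeasurable.Un[OF U_meas Icc_meas]]) auto
    also have "\<dots> \<le> measure lborel (U \<inter> {..s}) + measure lborel {s..s'}"
      using fmeasurableD[OF U_meas] fmeasurableD[OF Icc_meas] by (rule measure_Un_le)
    finally show ?thesis using that by simp
  qed
  have mono: "measure lborel (U \<inter> {..s}) \<le> measure lborel (U \<inter> {..s'})" if "s \<le> s'" for s s'
    using that by (intro measure_mono_fmeasurable[OF _ fmeasurableD[OF U_meas] U_meas]) auto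
  show "dist (measure lborel (U \<inter> {..s})) (measure lborel (U \<inter> {..s'})) \<le> 1 * dist s s'" for s s'
    using step[of s s'] step[of s' s] mono[of s s'] mono[of s' s]
    by (cases "s \<le> s'") (auto simp: dist_real_def)
qed simp

lemma interval_union_cut:
  assumes U: "interval_union c U" and "0 \<le> c" and x: "0 \<le> x" "x \<le> measure lborel U"
  obtains P where "is_piece c P" "P \<subseteq> U" "measure lborel P = x"
proof -
  define f where "f s = measure lborel (U \<inter> {..s})" for s
  have U_sub: "U \<subseteq> {0..c}" using interval_union_subset_compact(1)[OF U] .
  have U_meas: "U \<inter> {..s} \<in> sets lborel" for s
    using interval_union_fmeasurable[OF U] by (simp add: atMost_borel fmeasurable_Int_fmeasurable)
  have "f 0 \<le> measure lborel {0..0::real}"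
    unfolding f_def using U_sub by (intro measure_mono_fmeasurable[OF _ U_meas]) (auto simp: fmeasurable_compact)
  then have "f 0 \<le> x" using x by simp
  moreover have "U \<inter> {..c} = U" using U_sub by auto
  then have "x \<le> f c" unfolding f_def using x by simp
  moreover have "continuous_on {0..c} f"
    unfolding f_def by (rule continuous_on_measure_Int_atMost[OF interval_union_fmeasurable[OF U]])
  ultimately obtain s where s: "0 \<le> s" "s \<le> c" "f s = x"
    using IVT'[of f 0 x c] \<open>0 \<le> c\<close> by auto
  have "U \<inter> {..s} = U \<inter> {0..s}" using U_sub by auto
  moreover have "interval_union c {0..s}"
    unfolding interval_union_def using s by (intro exI[of _ "{{0..s}}"]) auto
  ultimately have "is_piece c (U \<inter> {..s})"
    using interval_union_Int[OF U] by (simp add: is_piece_iff_interval_union)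
  with s show ?thesis using that unfolding f_def by blast
qed

lemma is_bundle_binter:
  assumes V: "valid_instance N c G R alpha" and "S \<subseteq> N" "S \<noteq> {}"
  shows "is_bundle c G (binter R S)"
proof -
  have "finite S" using V \<open>S \<subseteq> N\<close> finite_subset unfolding valid_instance_def by blast
  moreover have "is_bundle c G (R i)" if "i \<in> S" for i
    using V that \<open>S \<subseteq> N\<close> unfolding valid_instance_def by blast
  ultimately show ?thesis
    using \<open>S \<noteq> {}\<close> unfolding is_bundle_def binter_def is_piece_iff_interval_union
    by (auto intro: interval_union_INT)
qed

lemma bsize_mono:
  assumes "finite G" "is_bundle c G B" "is_bundle c G B'" "bsubseteq B B'"
  shows "bsize B \<le> bsize B'"
proof -
  have "fst B \<in> fmeasurable lborel" "fst B' \<in> fmeasurable lborel"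
    using assms(2,3) unfolding is_bundle_def is_piece_iff_interval_union
    by (auto intro: interval_union_fmeasurable)
  then have "measure lborel (fst B) \<le> measure lborel (fst B')"
    using assms(4) unfolding bsubseteq_def by (intro measure_mono_fmeasurable) auto
  moreover have "card (snd B) \<le> card (snd B')"
    using assms unfolding bsubseteq_def is_bundle_def by (meson card_mono finite_subset)
  ultimately show ?thesis unfolding bsize_def cake_length_def by simp
qed

lemma common_bundle_exists:
  fixes l :: nat
  assumes V: "valid_instance N c G R alpha" and S: "S \<subseteq> N" "S \<noteq> {}"
    and l: "real l \<le> bsize (binter R S)"
  obtains B where "is_bundle c G B" "bsize B = real l" "\<forall>i\<in>S. bsubseteq B (R i)"
proof -
  obtain C0 g0 where B0: "binter R S = (C0, g0)" by fastforce
  have in_all: "\<forall>i\<in>S. bsubseteq B (R i)" if "bsubseteq B (binter R S)" for B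
    using that unfolding bsubseteq_def binter_def by auto
  have "is_bundle c G (C0, g0)" using is_bundle_binter[OF V S] B0 by simp
  then have C0: "interval_union c C0" and "g0 \<subseteq> G"
    unfolding is_bundle_def is_piece_iff_interval_union by auto
  have "finite g0" using \<open>g0 \<subseteq> G\<close> V finite_subset unfolding valid_instance_def by blast
  show ?thesis
  proof (cases "l \<le> card g0")
    case True
    then obtain g where "g \<subseteq> g0" "card g = l" using obtain_subset_with_card_n by metis
    then show ?thesis
      using that[of "({}, g)"] in_all[of "({}, g)"] \<open>g0 \<subseteq> G\<close> B0 is_piece_empty
      unfolding is_bundle_def bsize_def cake_length_def bsubseteq_def by auto
  next
    case False
    have "0 \<le> c" using V unfolding valid_instance_def by simp
    moreover have "real l - card g0 \<le> measure lborel C0"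
      using l B0 unfolding bsize_def cake_length_def by simp
    moreover have "0 \<le> real l - card g0" using False by simp
    ultimately obtain P where "is_piece c P" "P \<subseteq> C0" "measure lborel P = real l - card g0"
      using interval_union_cut[OF C0] by blast
    then show ?thesis
      using that[of "(P, g0)"] in_all[of "(P, g0)"] \<open>g0 \<subseteq> G\<close> B0
      unfolding is_bundle_def bsize_def cake_length_def bsubseteq_def by auto
  qed
qed

lemma EJR_M_few_below_level:
  fixes l :: nat
  assumes V: "valid_instance N c G R alpha" and EJR: "EJR_M N c G R alpha A"
    and coh: "cohesive N R alpha t S" and l: "1 \<le> l" "real l \<le> t"
  shows "real (card {i\<in>S. utility R i A < real l}) < real l * real (card S) / t"
proof -
  define T where "T = {i\<in>S. utility R i A < real l}"
  have "S \<subseteq> N" and S_large: "t * real (card N) / alpha \<le> real (card S)"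
    and "t \<le> bsize (binter R S)"
    using coh unfolding cohesive_def by auto
  have "alpha > 0" "card N > 0" using V unfolding valid_instance_def by (auto simp: card_gt_0_iff)
  have "real l * real (card N) / alpha > 0" using l \<open>alpha > 0\<close> \<open>card N > 0\<close> by simp
  have "t > 0" "real l > 0" using l by linarith+
  have T_lt: "real (card T) < real l * real (card N) / alpha"
  proof (rule ccontr)
    assume "\<not> ?thesis"
    then have T_large: "real l * real (card N) / alpha \<le> real (card T)" by simp
    then have "T \<noteq> {}" using \<open>real l * real (card N) / alpha > 0\<close> by auto
    then have "S \<noteq> {}" unfolding T_def by auto
    have "real l \<le> bsize (binter R S)" using \<open>t \<le> bsize (binter R S)\<close> l by linarith
    then obtain B where B: "is_bundle c G B" "bsize B = real l" "\<forall>i\<in>S. bsubseteq B (R i)"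
      by (rule common_bundle_exists[OF V \<open>S \<subseteq> N\<close> \<open>S \<noteq> {}\<close>])
    have "T \<subseteq> N" using \<open>S \<subseteq> N\<close> unfolding T_def by auto
    have "bsubseteq B (binter R T)" using B(3) unfolding T_def bsubseteq_def binter_def by auto
    moreover have "finite G" using V unfolding valid_instance_def by simp
    ultimately have "real l \<le> bsize (binter R T)"
      using bsize_mono B(1,2) is_bundle_binter[OF V \<open>T \<subseteq> N\<close> \<open>T \<noteq> {}\<close>] by metis
    then have "cohesive N R alpha (real l) T"
      using \<open>T \<subseteq> N\<close> T_large unfolding cohesive_def by simp
    moreover have "\<forall>i\<in>T. bsubseteq B (R i)" using B(3) unfolding T_def by simp
    ultimately obtain j where "j \<in> T" "real l \<le> utility R j A"
      using EJR[unfolded EJR_M_def, rule_format, of "real l" T] B(1,2) \<open>real l > 0\<close> by blast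
    then show False unfolding T_def by simp
  qed
  also have "real (card N) / alpha \<le> real (card S) / t"
    using S_large \<open>t > 0\<close> \<open>alpha > 0\<close> by (simp add: field_simps)
  then have "real l * real (card N) / alpha \<le> real l * real (card S) / t"
    by (metis mult_left_mono of_nat_0_le_iff times_divide_eq_right)
  finally show ?thesis unfolding T_def .
qed

lemma card_levels_le:
  fixes u :: real
  assumes "0 \<le> u"
  shows "real (card {l\<in>{1..k}. real l \<le> u}) \<le> u"
proof -
  have "{l\<in>{1..k}. real l \<le> u} \<subseteq> {1..nat \<lfloor>u\<rfloor>}"
    using assms by (auto simp: le_nat_floor)
  then have "card {l\<in>{1..k}. real l \<le> u} \<le> nat \<lfloor>u\<rfloor>"
    by (metis card_atLeastAtMost card_mono diff_Suc_1 finite_atLeastAtMost)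
  then show ?thesis using assms by linarith
qed

lemma sum_card_filter_swap:
  assumes "finite A" "finite B"
  shows "(\<Sum>a\<in>A. card {b\<in>B. P a b}) = (\<Sum>b\<in>B. card {a\<in>A. P a b})"
proof -
  have card_filter: "card {x\<in>X. Q x} = (\<Sum>x\<in>X. if Q x then 1 else 0)" if "finite X" for X and Q :: "_ \<Rightarrow> bool"
    using that by (simp add: sum.If_cases Int_def)
  show ?thesis
    using assms by (simp add: card_filter sum.swap[of _ A B])
qed

lemma sum_ge_of_level_counts:
  fixes u :: "'a \<Rightarrow> real" and k :: nat
  assumes "finite S" "\<forall>i\<in>S. 0 \<le> u i" "t > 0"
    and few_below: "\<And>l. l \<in> {1..k} \<Longrightarrow> real (card {i\<in>S. u i < real l}) \<le> real l * real (card S) / t"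
  shows "real (card S) * real k * (1 - (real k + 1) / (2 * t)) \<le> (\<Sum>i\<in>S. u i)"
proof -
  define s where "s = real (card S)"
  have "(\<Sum>l\<in>{1..k}. s - real l * s / t) = real k * s - s / t * (\<Sum>l\<in>{1..k}. real l)"
    by (simp add: sum_subtractf sum_distrib_left sum_divide_distrib mult.commute)
  also have "(\<Sum>l\<in>{1..k}. real l) = real k * (real k + 1) / 2"
    using double_gauss_sum_from_Suc_0[of k, where 'a = real] by simp
  also have "real k * s - s / t * (real k * (real k + 1) / 2) = s * real k * (1 - (real k + 1) / (2 * t))"
    using \<open>t > 0\<close> by (simp add: field_simps)
  finally have "s * real k * (1 - (real k + 1) / (2 * t)) = (\<Sum>l\<in>{1..k}. s - real l * s / t)" ..
  also have "\<dots> \<le> (\<Sum>l\<in>{1..k}. real (card {i\<in>S. real l \<le> u i}))"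
  proof (rule sum_mono)
    fix l assume "l \<in> {1..k}"
    have "S = {i\<in>S. real l \<le> u i} \<union> {i\<in>S. u i < real l}" by auto
    then have "card S = card {i\<in>S. real l \<le> u i} + card {i\<in>S. u i < real l}"
      using \<open>finite S\<close> card_Un_disjoint[of "{i\<in>S. real l \<le> u i}" "{i\<in>S. u i < real l}"]
      by (metis (no_types, lifting) disjoint_iff finite_Un mem_Collect_eq not_le)
    then show "s - real l * s / t \<le> real (card {i\<in>S. real l \<le> u i})"
      using few_below[OF \<open>l \<in> {1..k}\<close>] unfolding s_def by linarith
  qed
  also have "\<dots> = (\<Sum>i\<in>S. real (card {l\<in>{1..k}. real l \<le> u i}))"
    using sum_card_filter_swap[OF \<open>finite S\<close> finite_atLeastAtMost, where P = "\<lambda>i l. real l \<le> u i"]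
    by (simp flip: of_nat_sum)
  also have "\<dots> \<le> (\<Sum>i\<in>S. u i)"
    using assms(2) by (intro sum_mono card_levels_le) auto
  finally show ?thesis unfolding s_def .
qed

lemma utility_nonneg: "0 \<le> utility R i B"
  unfolding utility_def cake_length_def by simp

lemma cohesive_card_pos:
  assumes "valid_instance N c G R alpha" "cohesive N R alpha t S" "t > 0"
  shows "card S > 0"
proof -
  have "alpha > 0" "card N > 0" using assms(1) unfolding valid_instance_def by (auto simp: card_gt_0_iff)
  then have "t * real (card N) / alpha > 0" using \<open>t > 0\<close> by simp
  also have "\<dots> \<le> real (card S)" using assms(2) unfolding cohesive_def by simp
  finally show ?thesis by simp
qed

theorem mainTheorem13:
  fixes N :: "'a set" and G :: "'g set" and R :: "'a \<Rightarrow> 'g bndl"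
    and c alpha t :: real and S :: "'a set" and A :: "'g bndl"
  assumes "valid_instance N c G R alpha"
    and "t \<ge> 1"
    and "cohesive N R alpha t S"
    and "is_allocation c G alpha A"
    and "EJR_M N c G R alpha A"
  shows "avg_satisfaction R S A \<ge> of_int \<lfloor>t\<rfloor> * (1 - (of_int \<lfloor>t\<rfloor> + 1) / (2 * t))"
proof -
  define k where "k = nat \<lfloor>t\<rfloor>"
  have k: "real k = of_int \<lfloor>t\<rfloor>" "real k \<le> t" unfolding k_def using \<open>t \<ge> 1\<close> by auto
  have "t > 0" using \<open>t \<ge> 1\<close> by simp
  then have "card S > 0" using cohesive_card_pos[OF assms(1,3)] by blast
  have "real (card S) * real k * (1 - (real k + 1) / (2 * t)) \<le> (\<Sum>i\<in>S. utility R i A)"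
  proof (rule sum_ge_of_level_counts)
    show "finite S" using \<open>card S > 0\<close> card_gt_0_iff by blast
    show "real (card {i\<in>S. utility R i A < real l}) \<le> real l * real (card S) / t"
      if "l \<in> {1..k}" for l
      using EJR_M_few_below_level[OF assms(1,5,3), of l] that k(2) by auto
    show "\<forall>i\<in>S. 0 \<le> utility R i A" by (simp add: utility_nonneg)
  qed fact
  then show ?thesis
    using \<open>card S > 0\<close> k(1) unfolding avg_satisfaction_def by (simp add: field_simps)
qed

end
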